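(* Let $R=\bigoplus_{n\ge0}R_n=R_0[R_1]$ be a standard graded Noetherian ring such that $R_0$ is an Artinian local ring with maximal ideal $\mathfrak{m}$ and $\mathfrak{p}:=\mathfrak{m}R$ is a prime ideal. Let $M$ be a finitely generated graded $R$-module with $\operatorname{Ass}_R M=\{\mathfrak{p}\}$. If $M_t\neq 0$ for some $t\in\mathbb{Z}$, then there exists a graded (degree-preserving) injective homomorphism $(R/\mathfrak{p})(-t)\to M$; more precisely, there is a homogeneous $x\in M_t$ with $(0):_R x=\mathfrak{p}$.
   Context: $(R/\mathfrak{p})(-t)$ denotes the shifted graded module with $((R/\mathfrak{p})(-t))_n=(R/\mathfrak{p})_{n-t}$. *)

theory Defs
  imports Complex_Main
begin

text \<open>Commutative rings are types of class comm_ring_1 (the whole type is the ring R);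
modules are types of class ab_group_add with a scalar action s satisfying module s.\<close>

definition add_subgroup :: "'b::ab_group_add set \<Rightarrow> bool" where
  "add_subgroup A \<longleftrightarrow> 0 \<in> A \<and> (\<forall>x\<in>A. \<forall>y\<in>A. x + y \<in> A) \<and> (\<forall>x\<in>A. - x \<in> A)"

definition ring_ideal :: "'a::comm_ring_1 set \<Rightarrow> bool" where
  "ring_ideal I \<longleftrightarrow> add_subgroup I \<and> (\<forall>r x. x \<in> I \<longrightarrow> r * x \<in> I)"

definition mspan :: "('a::comm_ring_1 \<Rightarrow> 'b::ab_group_add \<Rightarrow> 'b) \<Rightarrow> 'b set \<Rightarrow> 'b set" where
  "mspan s B = {(\<Sum>a\<in>T. s (r a) a) | T r. finite T \<and> T \<subseteq> B}"

definition gen_ideal :: "'a::comm_ring_1 set \<Rightarrow> 'a set" where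
  "gen_ideal S = mspan (*) S"

definition prime_ideal :: "'a::comm_ring_1 set \<Rightarrow> bool" where
  "prime_ideal P \<longleftrightarrow> ring_ideal P \<and> P \<noteq> UNIV \<and> (\<forall>a b. a * b \<in> P \<longrightarrow> a \<in> P \<or> b \<in> P)"

definition noetherian_ring :: "'a::comm_ring_1 itself \<Rightarrow> bool" where
  "noetherian_ring _ \<longleftrightarrow> (\<forall>I::'a set. ring_ideal I \<longrightarrow> (\<exists>F. finite F \<and> I = gen_ideal F))"

definition direct_sum_decomp :: "('i \<Rightarrow> 'b::ab_group_add set) \<Rightarrow> bool" where
  "direct_sum_decomp G \<longleftrightarrow> (\<forall>i. add_subgroup (G i)) \<and>
     (\<forall>x. \<exists>!c. finite {i. c i \<noteq> 0} \<and> (\<forall>i. c i \<in> G i) \<and> x = (\<Sum>i\<in>{i. c i \<noteq> 0}. c i))"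

definition graded_ring :: "(nat \<Rightarrow> 'a::comm_ring_1 set) \<Rightarrow> bool" where
  "graded_ring Rg \<longleftrightarrow> direct_sum_decomp Rg \<and> 1 \<in> Rg 0 \<and>
     (\<forall>i j. \<forall>a\<in>Rg i. \<forall>b\<in>Rg j. a * b \<in> Rg (i + j))"

definition subring :: "'a::comm_ring_1 set \<Rightarrow> bool" where
  "subring S \<longleftrightarrow> add_subgroup S \<and> 1 \<in> S \<and> (\<forall>x\<in>S. \<forall>y\<in>S. x * y \<in> S)"

definition standard_graded :: "(nat \<Rightarrow> 'a::comm_ring_1 set) \<Rightarrow> bool" where
  "standard_graded Rg \<longleftrightarrow> graded_ring Rg \<and>
     (\<forall>S. subring S \<and> Rg 0 \<union> Rg 1 \<subseteq> S \<longrightarrow> S = UNIV)"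

definition sub_ideal :: "'a::comm_ring_1 set \<Rightarrow> 'a set \<Rightarrow> bool" where
  "sub_ideal A J \<longleftrightarrow> J \<subseteq> A \<and> add_subgroup J \<and> (\<forall>r\<in>A. \<forall>x\<in>J. r * x \<in> J)"

definition artinian_subring :: "'a::comm_ring_1 set \<Rightarrow> bool" where
  "artinian_subring A \<longleftrightarrow> (\<forall>J::nat \<Rightarrow> 'a set. (\<forall>n. sub_ideal A (J n)) \<and> (\<forall>n. J (Suc n) \<subseteq> J n)
      \<longrightarrow> (\<exists>N. \<forall>n\<ge>N. J n = J N))"

definition local_subring_max :: "'a::comm_ring_1 set \<Rightarrow> 'a set \<Rightarrow> bool" where
  "local_subring_max A m \<longleftrightarrow> sub_ideal A m \<and> m \<noteq> A \<and>
      (\<forall>J. sub_ideal A J \<and> J \<noteq> A \<longrightarrow> J \<subseteq> m)"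

definition graded_module ::
  "(nat \<Rightarrow> 'a::comm_ring_1 set) \<Rightarrow> ('a \<Rightarrow> 'b::ab_group_add \<Rightarrow> 'b) \<Rightarrow> (int \<Rightarrow> 'b set) \<Rightarrow> bool" where
  "graded_module Rg s Mg \<longleftrightarrow> module s \<and> direct_sum_decomp Mg \<and>
     (\<forall>i j. \<forall>r\<in>Rg i. \<forall>x\<in>Mg j. s r x \<in> Mg (int i + j))"

definition fin_gen_module :: "('a::comm_ring_1 \<Rightarrow> 'b::ab_group_add \<Rightarrow> 'b) \<Rightarrow> bool" where
  "fin_gen_module s \<longleftrightarrow> (\<exists>F. finite F \<and> mspan s F = UNIV)"

definition ann :: "('a::comm_ring_1 \<Rightarrow> 'b::ab_group_add \<Rightarrow> 'b) \<Rightarrow> 'b \<Rightarrow> 'a set" where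
  "ann s x = {r. s r x = 0}"

definition Ass :: "('a::comm_ring_1 \<Rightarrow> 'b::ab_group_add \<Rightarrow> 'b) \<Rightarrow> 'a set set" where
  "Ass s = {P. prime_ideal P \<and> (\<exists>x. ann s x = P)}"

end

theory Submission imports Defs begin

text \<open>Among the annihilators of the nonzero \<open>R\<^sub>0\<close>-multiples of a nonzero \<open>x \<in> M\<^sub>t\<close> choose a maximal
one, say that of \<open>y \<in> M\<^sub>t\<close>. Every \<open>a \<in> m\<close> is nilpotent since \<open>R\<^sub>0\<close> is Artinian local, and if
\<open>a y \<noteq> 0\<close> then maximality would give \<open>a\<^sup>k y \<noteq> 0\<close> for all \<open>k\<close>; hence \<open>p = m R \<subseteq> (0 :\<^sub>R y)\<close>.
A maximal annihilator among the nonzero \<open>R\<close>-multiples of \<open>y\<close> is an associated prime, hence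
equals \<open>p\<close>, and it contains \<open>(0 :\<^sub>R y)\<close>.\<close>

lemma ring_ideal_sum:
  assumes "ring_ideal I" "\<forall>a\<in>T. f a \<in> I"
  shows "sum f T \<in> I"
  using assms(2)
  by (induction T rule: infinite_finite_induct)
     (use assms(1) in \<open>auto simp: ring_ideal_def add_subgroup_def\<close>)

lemma gen_ideal_least:
  assumes "ring_ideal I" "G \<subseteq> I"
  shows "gen_ideal G \<subseteq> I"
proof
  fix y assume "y \<in> gen_ideal G"
  then obtain T r where "T \<subseteq> G" "y = (\<Sum>a\<in>T. r a * a)"
    unfolding gen_ideal_def mspan_def by auto
  moreover have "\<forall>a\<in>T. r a * a \<in> I"
    using assms calculation(1) by (auto simp: ring_ideal_def)
  ultimately show "y \<in> I"
    using ring_ideal_sum[OF assms(1)] by simp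
qed

lemma subset_gen_ideal: "G \<subseteq> gen_ideal G"
  unfolding gen_ideal_def mspan_def
  by (force intro!: exI[of _ "{g}" for g] exI[of _ "\<lambda>_. 1"])

lemma ring_ideal_UN_mono:
  fixes I :: "nat \<Rightarrow> 'a::comm_ring_1 set"
  assumes "\<And>n. ring_ideal (I n)" "mono I"
  shows "ring_ideal (\<Union>n. I n)"
  unfolding ring_ideal_def add_subgroup_def
proof (intro conjI ballI allI impI)
  show "0 \<in> (\<Union>n. I n)"
    using assms(1)[of 0] unfolding ring_ideal_def add_subgroup_def by blast
next
  fix x y assume "x \<in> (\<Union>n. I n)" "y \<in> (\<Union>n. I n)"
  then obtain i j where "x \<in> I i" "y \<in> I j"
    by blast
  then have "x \<in> I (max i j)" "y \<in> I (max i j)"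
    using monoD[OF assms(2)] by (metis max.cobounded1 max.cobounded2 subsetD)+
  then show "x + y \<in> (\<Union>n. I n)"
    using assms(1)[of "max i j"] unfolding ring_ideal_def add_subgroup_def by blast
next
  fix x assume "x \<in> (\<Union>n. I n)"
  then show "- x \<in> (\<Union>n. I n)"
    using assms(1) unfolding ring_ideal_def add_subgroup_def by blast
next
  fix r x assume "x \<in> (\<Union>n. I n)"
  then show "r * x \<in> (\<Union>n. I n)"
    using assms(1) unfolding ring_ideal_def by blast
qed

lemma noetherian_no_strict_incseq:
  fixes I :: "nat \<Rightarrow> 'a::comm_ring_1 set"
  assumes "noetherian_ring TYPE('a)" "\<And>n. ring_ideal (I n)"
  shows "\<not> (\<forall>n. I n \<subset> I (Suc n))"
proof
  assume strict: "\<forall>n. I n \<subset> I (Suc n)"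
  then have "mono I"
    by (simp add: mono_iff_le_Suc less_imp_le)
  then obtain G where G: "finite G" "(\<Union>n. I n) = gen_ideal G"
    using assms ring_ideal_UN_mono unfolding noetherian_ring_def by metis
  have "I i \<subseteq> I j \<or> I j \<subseteq> I i" for i j
    using monoD[OF \<open>mono I\<close>] nat_le_linear by metis
  then have "subset.chain UNIV (range I)"
    unfolding subset_chain_def by blast
  moreover have "G \<subseteq> (\<Union>n. I n)"
    using G(2) subset_gen_ideal by blast
  ultimately obtain N where "G \<subseteq> I N"
    using finite_subset_Union_chain[OF G(1)] by blast
  then have "I (Suc N) \<subseteq> I N"
    using gen_ideal_least[OF assms(2)] G(2) by blast
  with strict show False
    by blast
qed

lemma noetherian_maximal_ideal_in:
  fixes F :: "'a::comm_ring_1 set set"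
  assumes "noetherian_ring TYPE('a)" "I \<in> F" "\<forall>J\<in>F. ring_ideal J"
  obtains Q where "Q \<in> F" "\<And>J. J \<in> F \<Longrightarrow> Q \<subseteq> J \<Longrightarrow> J = Q"
proof -
  let ?R = "{(J, Q). ring_ideal Q \<and> ring_ideal J \<and> Q \<subset> J} :: ('a set \<times> 'a set) set"
  have "wf ?R"
    unfolding wf_iff_no_infinite_down_chain
  proof
    assume "\<exists>f. \<forall>i. (f (Suc i), f i) \<in> ?R"
    then obtain f where "\<forall>i. (f (Suc i), f i) \<in> ?R"
      by blast
    then have "\<And>i. ring_ideal (f i)" "\<forall>i. f i \<subset> f (Suc i)"
      by auto
    with noetherian_no_strict_incseq[OF assms(1)] show False
      by metis
  qed
  then obtain Q where "Q \<in> F" and Q_min: "\<And>J. (J, Q) \<in> ?R \<Longrightarrow> J \<notin> F"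
    by (rule wfE_min[OF _ assms(2)]) blast
  show thesis
  proof (rule that)
    show "Q \<in> F"
      by fact
    fix J assume "J \<in> F" "Q \<subseteq> J"
    show "J = Q"
    proof (rule ccontr)
      assume "J \<noteq> Q"
      with \<open>Q \<subseteq> J\<close> assms(3) \<open>J \<in> F\<close> \<open>Q \<in> F\<close> have "(J, Q) \<in> ?R"
        by auto
      with Q_min \<open>J \<in> F\<close> show False
        by blast
    qed
  qed
qed

lemma subring_graded_ring_0:
  assumes "graded_ring Rg"
  shows "subring (Rg 0)"
proof -
  have "add_subgroup (Rg 0)" "1 \<in> Rg 0"
    using assms unfolding graded_ring_def direct_sum_decomp_def by blast+
  moreover have "\<forall>x\<in>Rg 0. \<forall>y\<in>Rg 0. x * y \<in> Rg 0"
    using assms unfolding graded_ring_def by (metis add_0)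
  ultimately show ?thesis
    unfolding subring_def by blast
qed

lemma subring_power:
  assumes "subring A" "a \<in> A"
  shows "a ^ n \<in> A"
  by (induction n) (use assms in \<open>auto simp: subring_def\<close>)

lemma sub_ideal_principal:
  assumes "subring A" "a \<in> A"
  shows "sub_ideal A {r * a | r. r \<in> A}"
  unfolding sub_ideal_def add_subgroup_def
proof (intro conjI ballI)
  fix x y assume "x \<in> {r * a | r. r \<in> A}" "y \<in> {r * a | r. r \<in> A}"
  then obtain r r' where "r \<in> A" "r' \<in> A" "x = r * a" "y = r' * a"
    by blast
  with assms(1) show "x + y \<in> {r * a | r. r \<in> A}"
    unfolding subring_def add_subgroup_def by (metis (mono_tags, lifting) distrib_right mem_Collect_eq)
next
  fix x assume "x \<in> {r * a | r. r \<in> A}"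
  then obtain r where "r \<in> A" "x = r * a"
    by blast
  with assms(1) show "- x \<in> {r * a | r. r \<in> A}"
    unfolding subring_def add_subgroup_def by (metis (mono_tags, lifting) minus_mult_left mem_Collect_eq)
next
  fix b x assume "b \<in> A" "x \<in> {r * a | r. r \<in> A}"
  then obtain r where "r \<in> A" "x = r * a"
    by blast
  with assms(1) \<open>b \<in> A\<close> show "b * x \<in> {r * a | r. r \<in> A}"
    unfolding subring_def by (metis (mono_tags, lifting) mult.assoc mem_Collect_eq)
next
  show "{r * a | r. r \<in> A} \<subseteq> A" "0 \<in> {r * a | r. r \<in> A}"
    using assms unfolding subring_def add_subgroup_def by force+
qed

lemma local_subring_max_one_notin:
  assumes "local_subring_max A m"
  shows "1 \<notin> m"
proof
  assume "1 \<in> m"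
  then have "A \<subseteq> m"
    using assms unfolding local_subring_max_def sub_ideal_def by (metis mult.right_neutral subsetI)
  with assms show False
    unfolding local_subring_max_def sub_ideal_def by blast
qed

lemma local_subring_max_unit:
  assumes "subring A" "local_subring_max A m" "u \<in> A" "u \<notin> m"
  shows "\<exists>v\<in>A. v * u = 1"
proof -
  let ?U = "{r * u | r. r \<in> A}"
  have "1 \<in> A"
    using assms(1) unfolding subring_def by blast
  then have "u \<in> ?U"
    by (auto intro!: exI[of _ 1])
  then have "?U = A"
    using assms(2,4) sub_ideal_principal[OF assms(1,3)] unfolding local_subring_max_def by blast
  with \<open>1 \<in> A\<close> have "1 \<in> ?U"
    by simp
  then show ?thesis
    by force
qed

lemma artinian_powers_stabilize:
  assumes "subring A" "artinian_subring A" "a \<in> A"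
  shows "\<exists>N. \<exists>c\<in>A. a ^ N = c * a ^ Suc N"
proof -
  let ?J = "\<lambda>n. {r * a ^ n | r. r \<in> A}"
  have "\<forall>n. ?J (Suc n) \<subseteq> ?J n"
  proof (intro allI subsetI)
    fix n x assume "x \<in> ?J (Suc n)"
    then obtain r where "r \<in> A" "x = (r * a) * a ^ n"
      by (auto simp: mult.assoc)
    moreover have "r * a \<in> A"
      using assms(1,3) \<open>r \<in> A\<close> unfolding subring_def by blast
    ultimately show "x \<in> ?J n"
      by blast
  qed
  moreover have "\<forall>n. sub_ideal A (?J n)"
    using sub_ideal_principal[OF assms(1) subring_power[OF assms(1,3)]] by blast
  moreover from assms(2) have
    "(\<forall>n. sub_ideal A (?J n)) \<and> (\<forall>n. ?J (Suc n) \<subseteq> ?J n) \<longrightarrow> (\<exists>N. \<forall>n\<ge>N. ?J n = ?J N)"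
    unfolding artinian_subring_def by (rule spec)
  ultimately obtain N where "\<forall>n\<ge>N. ?J n = ?J N"
    by blast
  then have "?J (Suc N) = ?J N"
    using le_SucI[OF order_refl] by blast
  moreover have "a ^ N \<in> ?J N"
    using assms(1) unfolding subring_def by (auto intro!: exI[of _ 1])
  ultimately have "a ^ N \<in> ?J (Suc N)"
    by simp
  then show ?thesis
    by blast
qed

lemma artinian_local_nilpotent:
  assumes "subring A" "artinian_subring A" "local_subring_max A m" "a \<in> m"
  shows "\<exists>n. a ^ n = 0"
proof -
  have "m \<subseteq> A" and m_ideal: "\<forall>r\<in>A. \<forall>x\<in>m. r * x \<in> m" and "add_subgroup m"
    using assms(3) unfolding local_subring_max_def sub_ideal_def by auto
  then have "a \<in> A"
    using assms(4) by blast
  then obtain N c where c: "c \<in> A" "a ^ N = c * a ^ Suc N"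
    using artinian_powers_stabilize assms(1,2) by blast
  have "1 - c * a \<in> A"
    using assms(1) c(1) \<open>a \<in> A\<close> unfolding subring_def add_subgroup_def
    by (metis diff_conv_add_uminus)
  moreover have "1 - c * a \<notin> m"
  proof
    assume "1 - c * a \<in> m"
    moreover have "c * a \<in> m"
      using m_ideal c(1) assms(4) by blast
    ultimately have "1 \<in> m"
      using \<open>add_subgroup m\<close> unfolding add_subgroup_def by (metis diff_add_cancel)
    then show False
      using local_subring_max_one_notin[OF assms(3)] by blast
  qed
  ultimately obtain v where "v * (1 - c * a) = 1"
    using local_subring_max_unit assms(1,3) by blast
  moreover have "a ^ N * (1 - c * a) = 0"
    using c(2) by (simp add: algebra_simps)
  ultimately have "a ^ N = 0"
    by (metis mult.left_commute mult.right_neutral mult_zero_right)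
  then show ?thesis ..
qed

text \<open>Since \<open>ann s y \<subseteq> ann s (s r y)\<close> always, this says that \<open>ann s y\<close> is maximal among the
annihilators of the nonzero \<open>A\<close>-multiples of \<open>y\<close>.\<close>

definition ann_maximal_on :: "'a::comm_ring_1 set \<Rightarrow> ('a \<Rightarrow> 'b::ab_group_add \<Rightarrow> 'b) \<Rightarrow> 'b \<Rightarrow> bool" where
  "ann_maximal_on A s y \<longleftrightarrow> y \<noteq> 0 \<and> (\<forall>r\<in>A. s r y \<noteq> 0 \<longrightarrow> ann s (s r y) = ann s y)"

context module
begin

lemma ring_ideal_ann: "ring_ideal (ann scale x)"
  unfolding ring_ideal_def add_subgroup_def ann_def
  by (auto simp: scale_left_distrib scale_minus_left) (metis scale_scale scale_zero_right)

lemma ann_subset_ann_scale: "ann scale y \<subseteq> ann scale (scale r y)"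
  unfolding ann_def by (metis (mono_tags, lifting) mem_Collect_eq scale_left_commute scale_zero_right subsetI)

lemma exists_ann_maximal_on:
  assumes "noetherian_ring TYPE('a)" "subring A" "x \<noteq> 0"
  shows "\<exists>c\<in>A. ann_maximal_on A scale (scale c x)"
proof -
  let ?F = "{ann scale (scale c x) | c. c \<in> A \<and> scale c x \<noteq> 0}"
  have "ann scale x \<in> ?F"
    using assms(2,3) unfolding subring_def by force
  then obtain c where c: "c \<in> A" "scale c x \<noteq> 0"
    and max: "\<And>J. J \<in> ?F \<Longrightarrow> ann scale (scale c x) \<subseteq> J \<Longrightarrow> J = ann scale (scale c x)"
    using noetherian_maximal_ideal_in[OF assms(1)] ring_ideal_ann by (smt (verit) mem_Collect_eq)
  have "ann scale (scale r (scale c x)) = ann scale (scale c x)"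
    if "r \<in> A" "scale r (scale c x) \<noteq> 0" for r
  proof (rule max)
    show "ann scale (scale r (scale c x)) \<in> ?F"
      using that c(1) assms(2) unfolding subring_def by (auto simp: scale_scale)
  qed (rule ann_subset_ann_scale)
  with c show ?thesis
    unfolding ann_maximal_on_def by blast
qed

lemma nilpotent_annihilates_ann_maximal_on:
  assumes "ann_maximal_on A scale y" "\<And>k. a ^ k \<in> A" "a ^ n = 0"
  shows "scale a y = 0"
proof (rule ccontr)
  assume "scale a y \<noteq> 0"
  then have "a \<notin> ann scale y"
    by (simp add: ann_def)
  have "scale (a ^ k) y \<noteq> 0" for k
  proof (induction k)
    case 0
    then show ?case
      using assms(1) by (simp add: ann_maximal_on_def)
  next
    case (Suc k)
    then have "ann scale (scale (a ^ k) y) = ann scale y"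
      using assms(1,2) by (simp add: ann_maximal_on_def)
    with \<open>a \<notin> ann scale y\<close> have "a \<notin> ann scale (scale (a ^ k) y)"
      by simp
    then show ?case
      by (simp add: ann_def scale_scale)
  qed
  with assms(3) show False
    by (metis scale_zero_left)
qed

lemma prime_ideal_ann_maximal:
  assumes "ann_maximal_on UNIV scale w"
  shows "prime_ideal (ann scale w)"
  unfolding prime_ideal_def
proof (intro conjI allI impI)
  show "ring_ideal (ann scale w)"
    by (rule ring_ideal_ann)
  have "1 \<notin> ann scale w"
    using assms by (simp add: ann_maximal_on_def ann_def)
  then show "ann scale w \<noteq> UNIV"
    by blast
next
  fix a b assume "a * b \<in> ann scale w"
  then have "b \<in> ann scale (scale a w)"
    by (simp add: ann_def scale_scale mult.commute)
  with assms show "a \<in> ann scale w \<or> b \<in> ann scale w"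
    unfolding ann_maximal_on_def by (metis (mono_tags) ann_def iso_tuple_UNIV_I mem_Collect_eq)
qed

end

theorem lemma2p4:
  fixes Rg :: "nat \<Rightarrow> 'a::comm_ring_1 set"
    and m :: "'a set"
    and s :: "'a \<Rightarrow> 'b::ab_group_add \<Rightarrow> 'b"
    and Mg :: "int \<Rightarrow> 'b set"
    and t :: int
  assumes "standard_graded Rg"
    and "noetherian_ring TYPE('a)"
    and "artinian_subring (Rg 0)"
    and "local_subring_max (Rg 0) m"
    and "prime_ideal (gen_ideal m)"
    and "graded_module Rg s Mg"
    and "fin_gen_module s"
    and "Ass s = {gen_ideal m}"
    and "Mg t \<noteq> {0}"
  shows "\<exists>x\<in>Mg t. ann s x = gen_ideal m"
proof -
  have R0: "subring (Rg 0)"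
    using assms(1) subring_graded_ring_0 unfolding standard_graded_def by blast
  interpret module s
    using assms(6) by (simp add: graded_module_def)
  obtain x where x: "x \<in> Mg t" "x \<noteq> 0"
    using assms(6,9) unfolding graded_module_def direct_sum_decomp_def add_subgroup_def by blast
  then obtain c where "c \<in> Rg 0" and y_max: "ann_maximal_on (Rg 0) s (s c x)"
    using exists_ann_maximal_on[OF assms(2) R0] by blast
  define y where "y = s c x"
  have "y \<in> Mg t"
    using assms(6) \<open>c \<in> Rg 0\<close> x(1) unfolding y_def graded_module_def by (metis of_nat_0 add_0)
  have "m \<subseteq> ann s y"
  proof
    fix a assume "a \<in> m"
    moreover have "m \<subseteq> Rg 0"
      using assms(4) by (simp add: local_subring_max_def sub_ideal_def)
    ultimately have "a ^ k \<in> Rg 0" for k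
      using subring_power[OF R0] by blast
    with \<open>a \<in> m\<close> show "a \<in> ann s y"
      using artinian_local_nilpotent[OF R0 assms(3,4)] nilpotent_annihilates_ann_maximal_on y_max
      unfolding y_def ann_def by blast
  qed
  then have "gen_ideal m \<subseteq> ann s y"
    by (rule gen_ideal_least[OF ring_ideal_ann])
  obtain r where "ann_maximal_on UNIV s (s r y)"
    using exists_ann_maximal_on[OF assms(2), of UNIV y] y_max
    unfolding subring_def add_subgroup_def ann_maximal_on_def y_def by auto
  then have "ann s (s r y) = gen_ideal m"
    using prime_ideal_ann_maximal assms(8) unfolding Ass_def by blast
  with \<open>gen_ideal m \<subseteq> ann s y\<close> ann_subset_ann_scale[of y r] \<open>y \<in> Mg t\<close> show ?thesis
    by blast
qed

end
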